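(* Let $d\ge2$ and let $q^{\mathrm{pu}}$ be the $\varepsilon$-LDP $\texttt{PrivUnit}_2$ mechanism on $\mathbb{S}^{d-1}$ with parameters $p_0$ and $\gamma$ and estimator $\hat{\mathbf{x}}^{\mathrm{pu}}=\mathbf{z}/m_{\mathrm{pu}}$. Let $q^{\mathrm{mrc}}$ denote the MRC mechanism simulating $\texttt{PrivUnit}_2$ with $N$ candidates and estimator $\hat{\mathbf{x}}^{\mathrm{mrc}}=\mathbf{z}_K/m_{\mathrm{mrc}}$. Let $\lambda>0$. If \[ N\ge2e^{2\varepsilon}\Big(\frac{2(1+\lambda)}{\lambda(p_0-1/2)}\Big)^2\ln\Big(\frac{4(1+\lambda)}{\lambda(p_0-1/2)}\Big), \] then for every $\mathbf{x}\in\mathbb{S}^{d-1}$, with $E=\mathbb{E}_{q^{\mathrm{pu}}}[\|\hat{\mathbf{x}}^{\mathrm{pu}}-\mathbf{x}\|_2^2]$, \[ \mathbb{E}_{q^{\mathrm{mrc}}}\big[\|\hat{\mathbf{x}}^{\mathrm{mrc}}-\mathbf{x}\|_2^2\big]\le(1+\lambda)^2E+2(1+\lambda)(2+\lambda)\sqrt E+(2+\lambda)^2 . \]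
   Context: $\texttt{PrivUnit}_2$ with $\gamma\in[0,1]$, $p_0\ge1/2$ (chosen so that it is $\varepsilon$-LDP): on input $\mathbf{x}\in\mathbb{S}^{d-1}$ output $\mathbf{z}$ uniform on $\mathsf{Cap}_{\mathbf{x}}=\{\mathbf{z}\in\mathbb{S}^{d-1}:\langle\mathbf{z},\mathbf{x}\rangle\ge\gamma\}$ with probability $p_0$ and uniform on the complement otherwise; its density w.r.t. the uniform probability on the sphere is $q^{\mathrm{pu}}(\mathbf{z}\mid\mathbf{x})=p_0/\bar\theta$ on the cap and $(1-p_0)/(1-\bar\theta)$ off it, $\bar\theta$ being the uniform measure of the cap. For $p\in[0,1]$, $m(p)=\frac{(1-\gamma^2)^{\alpha}}{2^{d-2}(d-1)}\big[\frac{p}{B(\alpha,\alpha)-B(\tau;\alpha,\alpha)}-\frac{1-p}{B(\tau;\alpha,\alpha)}\big]$, $\alpha=\frac{d-1}2$, $\tau=\frac{1+\gamma}2$, $B(x;a,b)=\int_0^xt^{a-1}(1-t)^{b-1}dt$, $B(a,b)=B(1;a,b)$; $m_{\mathrm{pu}}=m(p_0)$. MRC: draw $\mathbf{z}_1,\dots,\mathbf{z}_N$ i.i.d. uniform on $\mathbb{S}^{d-1}$, $\pi^{\mathrm{mrc}}(k)=q^{\mathrm{pu}}(\mathbf{z}_k\mid\mathbf{x})/\sum_{k'}q^{\mathrm{pu}}(\mathbf{z}_{k'}\mid\mathbf{x})$, $K\sim\pi^{\mathrm{mrc}}$; $p_{\mathrm{mrc}}=\mathbb{P}(\mathbf{z}_K\in\mathsf{Cap}_{\mathbf{x}})$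 (over candidates and $K$) and $m_{\mathrm{mrc}}=m(p_{\mathrm{mrc}})$. Expectations under $q^{\mathrm{mrc}}$ are over the candidates and $K$. *)

theory Defs
  imports "HOL-Probability.Probability"
begin

text \<open>Uniform probability measure on the unit sphere of a Euclidean space,
  defined as the cone measure: push-forward of the normalised Lebesgue measure
  on the unit ball under the radial projection x / norm x.  (This coincides with
  the normalised surface measure.)\<close>
definition unif_sphere :: "'a::euclidean_space measure" where
  "unif_sphere = distr (uniform_measure lborel (ball 0 1)) borel (\<lambda>v. v /\<^sub>R norm v)"

definition cap :: "real \<Rightarrow> 'a::euclidean_space \<Rightarrow> 'a set" where
  "cap \<gamma> x = {z \<in> sphere 0 1. z \<bullet> x \<ge> \<gamma>}"

definition cap_measure :: "real \<Rightarrow> 'a::euclidean_space \<Rightarrow> real" where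
  "cap_measure \<gamma> x = measure unif_sphere (cap \<gamma> x)"

text \<open>Density of PrivUnit_2 w.r.t. the uniform probability on the sphere.\<close>
definition pu_density :: "real \<Rightarrow> real \<Rightarrow> 'a::euclidean_space \<Rightarrow> 'a \<Rightarrow> real" where
  "pu_density \<gamma> p0 x z =
     (if z \<in> cap \<gamma> x then p0 / cap_measure \<gamma> x
      else (1 - p0) / (1 - cap_measure \<gamma> x))"

definition inc_beta :: "real \<Rightarrow> real \<Rightarrow> real \<Rightarrow> real" where
  "inc_beta x a b = (LBINT t=0..x. t powr (a - 1) * (1 - t) powr (b - 1))"

definition m_fun :: "nat \<Rightarrow> real \<Rightarrow> real \<Rightarrow> real" where
  "m_fun d \<gamma> p =
     (let \<alpha> = (real d - 1) / 2; \<tau> = (1 + \<gamma>) / 2 in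
       (1 - \<gamma>\<^sup>2) powr \<alpha> / (2 ^ (d - 2) * (real d - 1)) *
       (p / (inc_beta 1 \<alpha> \<alpha> - inc_beta \<tau> \<alpha> \<alpha>) - (1 - p) / inc_beta \<tau> \<alpha> \<alpha>))"

definition m_pu :: "'a::euclidean_space itself \<Rightarrow> real \<Rightarrow> real \<Rightarrow> real" where
  "m_pu _ \<gamma> p0 = m_fun DIM('a) \<gamma> p0"

definition pu_mse :: "real \<Rightarrow> real \<Rightarrow> 'a::euclidean_space \<Rightarrow> real" where
  "pu_mse \<gamma> p0 x =
     (\<integral>z. (norm ((1 / m_pu TYPE('a) \<gamma> p0) *\<^sub>R z - x))\<^sup>2 * pu_density \<gamma> p0 x z \<partial>unif_sphere)"

definition candidates :: "nat \<Rightarrow> (nat \<Rightarrow> 'a::euclidean_space) measure" where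
  "candidates N = PiM {..<N} (\<lambda>_. unif_sphere)"

definition mrc_pi :: "real \<Rightarrow> real \<Rightarrow> nat \<Rightarrow> 'a::euclidean_space \<Rightarrow> (nat \<Rightarrow> 'a) \<Rightarrow> nat \<Rightarrow> real" where
  "mrc_pi \<gamma> p0 N x zs k =
     pu_density \<gamma> p0 x (zs k) / (\<Sum>k'<N. pu_density \<gamma> p0 x (zs k'))"

text \<open>p_mrc = P(z_K in Cap_x), over candidates and K.\<close>
definition p_mrc :: "real \<Rightarrow> real \<Rightarrow> nat \<Rightarrow> 'a::euclidean_space \<Rightarrow> real" where
  "p_mrc \<gamma> p0 N x =
     (\<integral>zs. (\<Sum>k<N. mrc_pi \<gamma> p0 N x zs k * indicator (cap \<gamma> x) (zs k)) \<partial>candidates N)"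

definition m_mrc :: "real \<Rightarrow> real \<Rightarrow> nat \<Rightarrow> 'a::euclidean_space \<Rightarrow> real" where
  "m_mrc \<gamma> p0 N x = m_fun DIM('a) \<gamma> (p_mrc \<gamma> p0 N x)"

definition mrc_mse :: "real \<Rightarrow> real \<Rightarrow> nat \<Rightarrow> 'a::euclidean_space \<Rightarrow> real" where
  "mrc_mse \<gamma> p0 N x =
     (\<integral>zs. (\<Sum>k<N. mrc_pi \<gamma> p0 N x zs k *
              (norm ((1 / m_mrc \<gamma> p0 N x) *\<^sub>R zs k - x))\<^sup>2) \<partial>candidates N)"

definition pu_ldp :: "'a::euclidean_space itself \<Rightarrow> real \<Rightarrow> real \<Rightarrow> real \<Rightarrow> bool" where
  "pu_ldp _ \<epsilon> \<gamma> p0 \<longleftrightarrow>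
     (\<forall>x\<in>sphere (0::'a) 1. \<forall>x'\<in>sphere (0::'a) 1. \<forall>z\<in>sphere (0::'a) 1.
        pu_density \<gamma> p0 x z \<le> exp \<epsilon> * pu_density \<gamma> p0 x' z)"

end

(*
  Both estimators have the form z / m with z a unit vector, so their mean squared errors lie
  between (1/m - 1)^2 and (1/m + 1)^2; it therefore suffices to show m_mrc >= m_pu / (1 + lam).
  The normaliser m(p) is affine in p with m(1/2) >= 0, so this follows once
  p_mrc >= p0 - lam (p0 - 1/2) / (1 + lam). Given the number C of candidates in the cap, the
  selected candidate lies in the cap with probability a C / (a C + b (N - C)), where a and b are
  the two values of the PrivUnit density; by eps-LDP both are at most e^eps, so this probability
  falls short of p0 = a theta by at most e^eps |C - N theta| / N. As C is binomial with mean
  N theta, the expected shortfall is at most e^eps / sqrt N, which the assumption on N makes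
  small enough.
*)
theory Submission
  imports Defs
begin

section \<open>The uniform distribution on the sphere\<close>

lemma measurable_normalize [measurable]:
  "(\<lambda>v::'a::euclidean_space. v /\<^sub>R norm v) \<in> borel_measurable borel"
  by measurable

lemma emeasure_lborel_unit_ball_pos: "0 < emeasure lborel (ball (0::'a::euclidean_space) 1)"
  using content_ball_gt_0_iff[of "0::'a" 1] emeasure_lborel_ball_finite[of "0::'a" 1]
  by (simp add: emeasure_eq_ennreal_measure less_top)

lemma prob_space_unif_sphere: "prob_space (unif_sphere :: 'a::euclidean_space measure)"
proof -
  have "prob_space (uniform_measure lborel (ball (0::'a) 1))"
    using emeasure_lborel_unit_ball_pos[where 'a='a] emeasure_lborel_ball_finite[of "0::'a" 1]
    by (intro prob_space_uniform_measure) auto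
  then show ?thesis
    unfolding unif_sphere_def by (rule prob_space.prob_space_distr) simp
qed

lemma space_unif_sphere [simp]: "space unif_sphere = UNIV"
  by (simp add: unif_sphere_def)

lemma sets_unif_sphere [simp, measurable_cong]: "sets unif_sphere = sets borel"
  by (simp add: unif_sphere_def)

lemma AE_unif_sphere_norm: "AE z in (unif_sphere :: 'a::euclidean_space measure). norm z = 1"
proof -
  have "{0::'a} \<in> null_sets lborel"
    by (rule finite_imp_null_set_lborel) simp
  then have "AE v in lborel. v \<in> ball 0 1 \<longrightarrow> v \<noteq> (0::'a)"
    by (rule AE_mp[OF AE_not_in]) auto
  then have "AE v in uniform_measure lborel (ball (0::'a) 1). v \<noteq> 0"
    by (rule AE_uniform_measureI[rotated]) simp
  then have "AE v in uniform_measure lborel (ball (0::'a) 1). norm (v /\<^sub>R norm v) = 1"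
    by eventually_elim simp
  then show ?thesis
    unfolding unif_sphere_def by (subst AE_distr_iff) auto
qed

lemma measure_unif_sphere:
  assumes "S \<in> sets borel"
  shows "measure (unif_sphere :: 'a::euclidean_space measure) S =
    measure lborel (ball 0 1 \<inter> (\<lambda>v. v /\<^sub>R norm v) -` S) / measure lborel (ball (0::'a) 1)"
proof -
  have "(\<lambda>v::'a. v /\<^sub>R norm v) -` S \<in> sets lborel"
    using measurable_sets[OF measurable_normalize assms] by simp
  moreover have "(\<lambda>v::'a. v /\<^sub>R norm v) \<in> measurable (uniform_measure lborel (ball 0 1)) borel"
    by simp
  ultimately have "measure (unif_sphere :: 'a measure) S =
      measure (uniform_measure lborel (ball (0::'a) 1)) ((\<lambda>v. v /\<^sub>R norm v) -` S)"
    unfolding unif_sphere_def by (subst measure_distr) (auto simp: assms)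
  also have "\<dots> = measure lborel (ball 0 1 \<inter> (\<lambda>v. v /\<^sub>R norm v) -` S) / measure lborel (ball (0::'a) 1)"
    using \<open>(\<lambda>v::'a. v /\<^sub>R norm v) -` S \<in> sets lborel\<close>
      emeasure_lborel_unit_ball_pos[where 'a='a] emeasure_lborel_ball_finite[of "0::'a" 1]
    by (subst measure_uniform_measure) auto
  finally show ?thesis .
qed

lemma measure_unif_sphere_pos:
  assumes S: "S \<in> sets borel" and U: "open U" "U \<noteq> {}" "U \<subseteq> ball 0 1"
    and directions: "\<And>v. v \<in> U \<Longrightarrow> v /\<^sub>R norm v \<in> S"
  shows "0 < measure (unif_sphere :: 'a::euclidean_space measure) S"
proof -
  obtain c where "c \<in> U"
    using U(2) by blast
  then obtain e where e: "e > 0" "ball c e \<subseteq> U"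
    using U(1) open_contains_ball by blast
  define P where "P = ball 0 1 \<inter> (\<lambda>v::'a. v /\<^sub>R norm v) -` S"
  have "P \<in> sets lborel"
    using measurable_sets[OF measurable_normalize S] by (simp add: P_def)
  moreover have "emeasure lborel P \<le> emeasure lborel (ball (0::'a) 1)"
    by (rule emeasure_mono) (auto simp: P_def)
  then have "emeasure lborel P < \<infinity>"
    using emeasure_lborel_ball_finite[of "0::'a" 1] by (rule order.strict_trans1)
  moreover have "ball c e \<subseteq> P"
    using e U(3) directions by (auto simp: P_def)
  ultimately have "measure lborel (ball c e) \<le> measure lborel P"
    by (intro measure_mono_fmeasurable) (auto simp: fmeasurable_def)
  moreover have "0 < measure lborel (ball c e)"
    using content_ball_gt_0_iff[of c e] e by simp
  ultimately have "0 < measure lborel P"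
    by linarith
  moreover have "0 < measure lborel (ball (0::'a) 1)"
    using content_ball_gt_0_iff[of "0::'a" 1] by simp
  ultimately show ?thesis
    unfolding measure_unif_sphere[OF S] P_def by (rule divide_pos_pos)
qed

lemma hyperplane_null_sets_lborel:
  fixes y :: "'a::euclidean_space"
  assumes "y \<noteq> 0"
  shows "{v. y \<bullet> v = 0} \<in> null_sets lborel"
proof -
  have "{v. y \<bullet> v = 0} \<in> null_sets lebesgue"
    using negligible_hyperplane[of y 0] assms by (simp add: negligible_iff_null_sets)
  moreover have "closed {v::'a. y \<bullet> v = 0}"
    by (intro closed_Collect_eq continuous_intros)
  ultimately show ?thesis
    by (simp add: null_sets_completion_iff borel_closed)
qed

lemma measure_unif_sphere_hyperplane:
  fixes y :: "'a::euclidean_space"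
  assumes "y \<noteq> 0"
  shows "measure unif_sphere {z. y \<bullet> z = 0} = 0"
proof -
  have H: "{z::'a. y \<bullet> z = 0} \<in> sets borel"
    by (intro borel_closed closed_Collect_eq continuous_intros)
  have "(\<lambda>v::'a. v /\<^sub>R norm v) -` {z. y \<bullet> z = 0} = {v. y \<bullet> v = 0}"
    by auto
  moreover have "ball 0 1 \<inter> {v. y \<bullet> v = 0} \<in> null_sets lborel"
    using hyperplane_null_sets_lborel[OF assms] by (rule null_sets_subset) auto
  ultimately show ?thesis
    by (simp add: measure_unif_sphere[OF H] measure_eq_0_null_sets)
qed

section \<open>Caps and local differential privacy\<close>

lemma cap_borel [measurable]: "cap \<gamma> x \<in> sets borel"
proof -
  have "closed (sphere 0 1 \<inter> {z. \<gamma> \<le> z \<bullet> x})"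
    by (intro closed_Int closed_sphere closed_Collect_le continuous_intros)
  then show ?thesis
    by (simp add: cap_def Collect_conj_eq)
qed

lemma cap_measure_pos:
  fixes x :: "'a::euclidean_space"
  assumes x: "norm x = 1" and "\<gamma> < 1"
  shows "0 < cap_measure \<gamma> x"
  unfolding cap_measure_def
proof (rule measure_unif_sphere_pos[where U="{v. \<gamma> * norm v < v \<bullet> x} \<inter> ball 0 1"])
  show "open ({v. \<gamma> * norm v < v \<bullet> x} \<inter> ball 0 1)"
    by (intro open_Int open_ball open_Collect_less continuous_intros)
  have "x /\<^sub>R 2 \<in> {v. \<gamma> * norm v < v \<bullet> x} \<inter> ball 0 1"
    using assms by (auto simp: inner_commute[of x] dot_square_norm)
  then show "{v. \<gamma> * norm v < v \<bullet> x} \<inter> ball 0 1 \<noteq> {}"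
    by blast
  fix v assume v: "v \<in> {v. \<gamma> * norm v < v \<bullet> x} \<inter> ball 0 1"
  then have "v \<noteq> 0"
    by auto
  with v have "\<gamma> \<le> (v \<bullet> x) / norm v"
    by (auto simp: field_simps)
  with \<open>v \<noteq> 0\<close> show "v /\<^sub>R norm v \<in> cap \<gamma> x"
    by (auto simp: cap_def divide_inverse mult.commute)
qed auto

lemma cap_measure_less_1:
  fixes x :: "'a::euclidean_space"
  assumes x: "norm x = 1" and "0 \<le> \<gamma>"
  shows "cap_measure \<gamma> x < 1"
proof -
  interpret prob_space "unif_sphere :: 'a measure"
    by (rule prob_space_unif_sphere)
  have "0 < measure unif_sphere (UNIV - cap \<gamma> x)"
  proof (rule measure_unif_sphere_pos[where U="{v. v \<bullet> x < 0} \<inter> ball 0 1"])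
    show "open ({v. v \<bullet> x < 0} \<inter> ball 0 1)"
      by (intro open_Int open_ball open_Collect_less continuous_intros)
    have "- x /\<^sub>R 2 \<in> {v. v \<bullet> x < 0} \<inter> ball 0 1"
      using x by (auto simp: dot_square_norm)
    then show "{v. v \<bullet> x < 0} \<inter> ball 0 1 \<noteq> {}"
      by blast
    fix v assume v: "v \<in> {v. v \<bullet> x < 0} \<inter> ball 0 1"
    then have "v \<noteq> 0"
      by auto
    with v have "(v \<bullet> x) / norm v < 0"
      by (auto simp: divide_neg_pos)
    with assms show "v /\<^sub>R norm v \<in> UNIV - cap \<gamma> x"
      by (auto simp: cap_def divide_inverse mult.commute)
  qed auto
  then show ?thesis
    using prob_compl[of "cap \<gamma> x"] by (simp add: cap_measure_def)
qed

text \<open>Opposite caps meet only on the equator, which is a null set.\<close>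
lemma cap_measure_add_opposite_le_1:
  fixes y :: "'a::euclidean_space"
  assumes "y \<noteq> 0" and "0 \<le> \<gamma>"
  shows "cap_measure \<gamma> y + cap_measure \<gamma> (-y) \<le> 1"
proof -
  interpret prob_space "unif_sphere :: 'a measure"
    by (rule prob_space_unif_sphere)
  have "cap \<gamma> y \<inter> cap \<gamma> (-y) \<subseteq> {z. y \<bullet> z = 0}"
    using assms(2) by (auto simp: cap_def inner_commute)
  moreover have "{z::'a. y \<bullet> z = 0} \<in> sets unif_sphere"
    by (simp add: borel_closed closed_Collect_eq continuous_intros)
  ultimately have "measure unif_sphere (cap \<gamma> y \<inter> cap \<gamma> (-y)) = 0"
    using measure_unif_sphere_hyperplane[OF assms(1)] finite_measure_mono
    by (metis measure_nonneg order_antisym)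
  moreover have "measure unif_sphere (cap \<gamma> y \<union> cap \<gamma> (-y)) =
      cap_measure \<gamma> y + cap_measure \<gamma> (-y) - measure unif_sphere (cap \<gamma> y \<inter> cap \<gamma> (-y))"
    unfolding cap_measure_def by (rule measure_Un3) (auto simp: fmeasurable_eq_sets)
  ultimately show ?thesis
    using prob_le_1[of "cap \<gamma> y \<union> cap \<gamma> (-y)"] by linarith
qed

lemma exists_orthogonal_unit_small_cap:
  fixes x :: "'a::euclidean_space"
  assumes "DIM('a) \<ge> 2" and "0 \<le> \<gamma>"
  obtains x' where "norm x' = 1" "x \<bullet> x' = 0" "cap_measure \<gamma> x' \<le> 1/2"
proof -
  obtain y0 where "y0 \<noteq> 0" "orthogonal x y0"
    using orthogonal_to_vector_exists[OF assms(1)] by blast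
  moreover define y where "y = y0 /\<^sub>R norm y0"
  ultimately have y: "norm y = 1" "x \<bullet> y = 0" "x \<bullet> -y = 0"
    by (auto simp: orthogonal_def)
  have "cap_measure \<gamma> y + cap_measure \<gamma> (-y) \<le> 1"
    using y(1) assms(2) by (intro cap_measure_add_opposite_le_1) auto
  then have "cap_measure \<gamma> y \<le> 1/2 \<or> cap_measure \<gamma> (-y) \<le> 1/2"
    by linarith
  then show ?thesis
    using that[of y] that[of "-y"] y by auto
qed

lemma exists_in_cap_not_in_orthogonal_cap:
  fixes x x' :: "'a::euclidean_space"
  assumes "norm x = 1" "norm x' = 1" "x \<bullet> x' = 0" and "0 \<le> \<gamma>" "\<gamma> < 1"
  obtains z where "z \<in> cap \<gamma> x" "z \<notin> cap \<gamma> x'"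
proof -
  define s where "s = sqrt (1 - \<gamma>\<^sup>2)"
  have "\<gamma>\<^sup>2 < 1"
    using assms(4,5) by (simp add: abs_square_less_1)
  then have s: "0 < s" "s\<^sup>2 = 1 - \<gamma>\<^sup>2"
    by (auto simp: s_def)
  define z where "z = \<gamma> *\<^sub>R x - s *\<^sub>R x'"
  have xx: "x \<bullet> x = 1" "x' \<bullet> x' = 1" "x' \<bullet> x = 0" "x \<bullet> x' = 0"
    using assms(1-3) by (auto simp: dot_square_norm inner_commute)
  have "z \<bullet> z = \<gamma>\<^sup>2 + s\<^sup>2"
    by (simp add: z_def inner_diff_left inner_diff_right xx power2_eq_square)
  then have "norm z = 1"
    using s by (simp add: norm_eq_1)
  moreover have "z \<bullet> x = \<gamma>" "z \<bullet> x' = - s"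
    by (simp_all add: z_def inner_diff_left xx)
  ultimately show ?thesis
    using that[of z] s assms(4) by (auto simp: cap_def)
qed

lemma exists_not_in_orthogonal_caps:
  fixes x x' :: "'a::euclidean_space"
  assumes "norm x = 1" "norm x' = 1" "x \<bullet> x' = 0" and "0 \<le> \<gamma>"
  obtains z where "norm z = 1" "z \<notin> cap \<gamma> x" "z \<notin> cap \<gamma> x'"
proof -
  define z where "z = - ((x + x') /\<^sub>R sqrt 2)"
  have xx: "x \<bullet> x = 1" "x' \<bullet> x' = 1" "x' \<bullet> x = 0" "x \<bullet> x' = 0"
    using assms(1-3) by (auto simp: dot_square_norm inner_commute)
  have "(x + x') \<bullet> (x + x') = 2"
    by (simp add: inner_add_left inner_add_right xx)
  then have "norm (x + x') = sqrt 2"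
    by (simp add: norm_eq_sqrt_inner)
  then have "norm z = 1"
    by (simp add: z_def)
  moreover have "z \<bullet> x = - (1 / sqrt 2)" "z \<bullet> x' = - (1 / sqrt 2)"
    by (simp_all add: z_def inner_add_left xx inverse_eq_divide)
  moreover have "0 < 1 / sqrt (2::real)"
    by simp
  ultimately have "z \<bullet> x < \<gamma>" "z \<bullet> x' < \<gamma>"
    using assms(4) by linarith+
  with \<open>norm z = 1\<close> show ?thesis
    using that[of z] by (auto simp: cap_def)
qed

lemma pu_density_eqI:
  assumes "z \<in> cap \<gamma> x \<longleftrightarrow> z' \<in> cap \<gamma> x"
  shows "pu_density \<gamma> p0 x z = pu_density \<gamma> p0 x z'"
  using assms by (simp add: pu_density_def)

lemma pu_ldp_density_le_off_small_cap:
  fixes x x' z :: "'a::euclidean_space"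
  assumes ldp: "pu_ldp TYPE('a) \<epsilon> \<gamma> p0" and p0: "p0 \<le> 1"
    and x: "norm x = 1" "norm x' = 1" "cap_measure \<gamma> x' \<le> 1/2"
    and z: "norm z = 1" "z \<notin> cap \<gamma> x'"
  shows "pu_density \<gamma> p0 x z \<le> exp \<epsilon> * (2 * (1 - p0))"
proof -
  have "0 \<le> (1 - p0) * (1 - 2 * cap_measure \<gamma> x')"
    using x(3) p0 by (intro mult_nonneg_nonneg) auto
  then have "pu_density \<gamma> p0 x' z \<le> 2 * (1 - p0)"
    using x(3) z(2) by (simp add: pu_density_def divide_simps algebra_simps)
  moreover have "pu_density \<gamma> p0 x z \<le> exp \<epsilon> * pu_density \<gamma> p0 x' z"
    using ldp x z(1) unfolding pu_ldp_def by simp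
  ultimately show ?thesis
    by (meson exp_ge_zero mult_left_mono order_trans)
qed

text \<open>Every value of the density at x is attained off the cap of an orthogonal direction x'
  whose cap has measure at most 1/2, and there the density at x' is at most 2 (1 - p0) \<le> 1.\<close>
lemma pu_ldp_bounds:
  fixes x :: "'a::euclidean_space"
  assumes x: "norm x = 1" and "DIM('a) \<ge> 2" and \<gamma>: "0 \<le> \<gamma>" "\<gamma> < 1"
    and p0: "1/2 \<le> p0" "p0 \<le> 1" and ldp: "pu_ldp TYPE('a) \<epsilon> \<gamma> p0"
  shows "p0 < 1" "pu_density \<gamma> p0 x z \<le> exp \<epsilon>"
proof -
  obtain x' where x': "norm x' = 1" "x \<bullet> x' = 0" "cap_measure \<gamma> x' \<le> 1/2"
    using exists_orthogonal_unit_small_cap[OF assms(2) \<gamma>(1)] by blast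
  note transfer = pu_ldp_density_le_off_small_cap[OF ldp p0(2) x x'(1,3)]
  obtain z1 where z1: "z1 \<in> cap \<gamma> x" "z1 \<notin> cap \<gamma> x'"
    using exists_in_cap_not_in_orthogonal_cap[OF x x' (1,2) \<gamma>] by blast
  then have z1_bound: "pu_density \<gamma> p0 x z1 \<le> exp \<epsilon> * (2 * (1 - p0))"
    by (intro transfer) (auto simp: cap_def)
  obtain z2 where z2: "norm z2 = 1" "z2 \<notin> cap \<gamma> x" "z2 \<notin> cap \<gamma> x'"
    using exists_not_in_orthogonal_caps[OF x x'(1,2) \<gamma>(1)] by blast
  have "0 < pu_density \<gamma> p0 x z1"
    using z1(1) cap_measure_pos[OF x \<gamma>(2)] p0 by (simp add: pu_density_def)
  also note z1_bound
  finally show "p0 < 1"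
    by (simp add: zero_less_mult_iff)
  have "pu_density \<gamma> p0 x z \<le> exp \<epsilon> * (2 * (1 - p0))"
  proof (cases "z \<in> cap \<gamma> x")
    case True
    then have "pu_density \<gamma> p0 x z = pu_density \<gamma> p0 x z1"
      using z1(1) by (intro pu_density_eqI) blast
    then show ?thesis
      using z1_bound by simp
  next
    case False
    then have "pu_density \<gamma> p0 x z = pu_density \<gamma> p0 x z2"
      using z2(2) by (intro pu_density_eqI) blast
    then show ?thesis
      using z2(1,3) transfer by simp
  qed
  also have "\<dots> \<le> exp \<epsilon>"
    using p0 by simp
  finally show "pu_density \<gamma> p0 x z \<le> exp \<epsilon>" .
qed

section \<open>The normalising function\<close>

definition sym_beta_integrand :: "real \<Rightarrow> real \<Rightarrow> real" where
  "sym_beta_integrand a t = t powr (a - 1) * (1 - t) powr (a - 1)"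

lemma sym_beta_integrand_nonneg: "0 \<le> sym_beta_integrand a t"
  by (simp add: sym_beta_integrand_def)

lemma sym_beta_integrand_reflect: "sym_beta_integrand a (1 - t) = sym_beta_integrand a t"
  by (simp add: sym_beta_integrand_def)

lemma sym_beta_integrand_integrable_on:
  assumes "0 < a" "0 \<le> u" "v \<le> 1"
  shows "sym_beta_integrand a integrable_on {u..v}"
proof (rule integrable_on_subinterval)
  show "sym_beta_integrand a integrable_on {0..1}"
    using has_integral_Beta_real[of a a] assms(1) unfolding sym_beta_integrand_def by blast
qed (use assms in auto)

lemma inc_beta_eq_integral:
  assumes "0 < a" "0 \<le> u" "u \<le> 1"
  shows "inc_beta u a a = integral {0..u} (sym_beta_integrand a)"
proof -
  have "sym_beta_integrand a absolutely_integrable_on {0..u}"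
    using sym_beta_integrand_integrable_on[OF assms(1) order_refl assms(3)]
    by (intro nonnegative_absolutely_integrable) (auto simp: sym_beta_integrand_nonneg)
  then have "set_integrable lborel {0..u} (sym_beta_integrand a)"
    unfolding absolutely_integrable_on_def set_integrable_def
    by (subst (asm) integrable_completion) (auto simp: sym_beta_integrand_def)
  then show ?thesis
    using interval_integral_eq_integral[of 0 u "sym_beta_integrand a"] assms(2)
    by (simp add: inc_beta_def sym_beta_integrand_def zero_ereal_def)
qed

lemma integral_sym_beta_integrand_reflect:
  "integral {t..1} (sym_beta_integrand a) = integral {0..1 - t} (sym_beta_integrand a)"
proof -
  have "integral {0..1 - t} (sym_beta_integrand a) =
      integral {0..1 - t} ((\<lambda>x. sym_beta_integrand a (- x)) \<circ> (+) (- 1))"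
    by (rule integral_cong) (use sym_beta_integrand_reflect in simp)
  also have "\<dots> = integral {- 1..- t} (\<lambda>x. sym_beta_integrand a (- x))"
    by (simp add: integral_shift_Icc_real)
  finally show ?thesis
    by simp
qed

lemma integral_sym_beta_integrand_pos:
  assumes a: "0 < a" and uv: "0 \<le> u" "u < v" "v \<le> 1"
  shows "0 < integral {u..v} (sym_beta_integrand a)"
proof -
  define c where "c = (3 * u + v) / 4"
  define w where "w = (u + 3 * v) / 4"
  have cw: "0 < c" "c < w" "w < 1" "u \<le> c" "w \<le> v"
    using uv by (auto simp: c_def w_def)
  have "sym_beta_integrand a integrable_on {c..w}"
    using cw by (intro sym_beta_integrand_integrable_on[OF a]) auto
  then have "(sym_beta_integrand a has_integral integral {c..w} (sym_beta_integrand a)) (cbox c w)"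
    unfolding cbox_interval by (rule integrable_integral)
  moreover have "continuous_on (cbox c w) (sym_beta_integrand a)"
    unfolding sym_beta_integrand_def using cw by (auto intro!: continuous_intros simp: cbox_interval)
  moreover have "0 < sym_beta_integrand a ((c + w) / 2)"
    using cw by (auto simp: sym_beta_integrand_def)
  ultimately have "integral {c..w} (sym_beta_integrand a) \<noteq> 0"
    using cw has_integral_0_cbox_imp_0[of c w "sym_beta_integrand a" "(c + w) / 2"]
    by (auto simp: sym_beta_integrand_nonneg cbox_interval)
  moreover have "0 \<le> integral {c..w} (sym_beta_integrand a)"
    using \<open>sym_beta_integrand a integrable_on {c..w}\<close>
    by (intro integral_nonneg) (auto simp: sym_beta_integrand_nonneg)
  moreover have "integral {c..w} (sym_beta_integrand a) \<le> integral {u..v} (sym_beta_integrand a)"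
    using cw uv by (intro integral_subset_le sym_beta_integrand_integrable_on[OF a])
      (auto simp: sym_beta_integrand_nonneg)
  ultimately show ?thesis
    by linarith
qed

lemma inc_beta_upper_part:
  assumes a: "0 < a" and \<tau>: "1/2 \<le> \<tau>" "\<tau> < 1"
  shows "0 < inc_beta 1 a a - inc_beta \<tau> a a" "inc_beta 1 a a - inc_beta \<tau> a a \<le> inc_beta \<tau> a a"
proof -
  have "integral {0..\<tau>} (sym_beta_integrand a) + integral {\<tau>..1} (sym_beta_integrand a) =
      integral {0..1} (sym_beta_integrand a)"
    using \<tau> sym_beta_integrand_integrable_on[OF a, of 0 1]
    by (intro Henstock_Kurzweil_Integration.integral_combine) auto
  then have upper: "inc_beta 1 a a - inc_beta \<tau> a a = integral {\<tau>..1} (sym_beta_integrand a)"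
    using inc_beta_eq_integral[OF a, of 1] inc_beta_eq_integral[OF a, of \<tau>] \<tau> by simp
  show "0 < inc_beta 1 a a - inc_beta \<tau> a a"
    unfolding upper using \<tau> by (intro integral_sym_beta_integrand_pos[OF a]) auto
  text \<open>By symmetry of the integrand, the part above \<tau> \<ge> 1/2 equals the part below 1 - \<tau> \<le> \<tau>.\<close>
  have "integral {0..1 - \<tau>} (sym_beta_integrand a) \<le> integral {0..\<tau>} (sym_beta_integrand a)"
    using \<tau> by (intro integral_subset_le sym_beta_integrand_integrable_on[OF a])
      (auto simp: sym_beta_integrand_nonneg)
  then show "inc_beta 1 a a - inc_beta \<tau> a a \<le> inc_beta \<tau> a a"
    using inc_beta_eq_integral[OF a, of \<tau>] \<tau>
    unfolding upper integral_sym_beta_integrand_reflect by simp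
qed

lemma m_fun_affine:
  assumes d: "d \<ge> 2" and \<gamma>: "0 \<le> \<gamma>" "\<gamma> < 1"
  obtains c s where "0 \<le> c" "0 < s" "\<And>p. m_fun d \<gamma> p = c + s * (p - 1/2)"
proof -
  define a where "a = (real d - 1) / 2"
  define \<tau> where "\<tau> = (1 + \<gamma>) / 2"
  define K where "K = (1 - \<gamma>\<^sup>2) powr a / (2 ^ (d - 2) * (real d - 1))"
  define B1 where "B1 = inc_beta 1 a a - inc_beta \<tau> a a"
  define B2 where "B2 = inc_beta \<tau> a a"
  have "0 < a"
    using d by (simp add: a_def)
  moreover have "1/2 \<le> \<tau>" "\<tau> < 1"
    using \<gamma> by (auto simp: \<tau>_def)
  ultimately have B: "0 < B1" "B1 \<le> B2"
    unfolding B1_def B2_def by (rule inc_beta_upper_part)+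
  have "\<gamma>\<^sup>2 < 1"
    using \<gamma> by (simp add: abs_square_less_1)
  then have K: "0 < K"
    using d by (simp add: K_def)
  have "0 \<le> K / 2 * (1 / B1 - 1 / B2)"
    using K B by (simp add: frac_le)
  moreover have "0 < K * (1 / B1 + 1 / B2)"
    using K B by (simp add: add_pos_pos)
  moreover have "m_fun d \<gamma> p = K / 2 * (1 / B1 - 1 / B2) + K * (1 / B1 + 1 / B2) * (p - 1/2)" for p
  proof -
    have "m_fun d \<gamma> p = K * (p / B1 - (1 - p) / B2)"
      by (simp add: m_fun_def Let_def K_def B1_def B2_def a_def \<tau>_def)
    also have "\<dots> = K / 2 * (1 / B1 - 1 / B2) + K * (1 / B1 + 1 / B2) * (p - 1/2)"
      using B by (simp add: field_simps)
    finally show ?thesis .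
  qed
  ultimately show ?thesis
    using that by blast
qed

lemma m_fun_pos:
  assumes "d \<ge> 2" "0 \<le> \<gamma>" "\<gamma> < 1" "1/2 < p"
  shows "0 < m_fun d \<gamma> p"
proof -
  obtain c s where "0 \<le> c" "0 < s" "\<And>p. m_fun d \<gamma> p = c + s * (p - 1/2)"
    using m_fun_affine[OF assms(1-3)] by blast
  moreover have "0 < s * (p - 1/2)"
    using assms(4) \<open>0 < s\<close> by simp
  ultimately show ?thesis
    by simp
qed

lemma m_fun_ge_div:
  assumes "d \<ge> 2" "0 \<le> \<gamma>" "\<gamma> < 1" "0 \<le> lam"
    and q: "p - lam * (p - 1/2) / (1 + lam) \<le> q"
  shows "m_fun d \<gamma> p / (1 + lam) \<le> m_fun d \<gamma> q"
proof -
  obtain c s where cs: "0 \<le> c" "0 < s" and m: "\<And>p. m_fun d \<gamma> p = c + s * (p - 1/2)"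
    using m_fun_affine[OF assms(1-3)] by blast
  have "(c + s * (p - 1/2)) / (1 + lam) \<le> c + s * ((p - 1/2) - lam * (p - 1/2) / (1 + lam))"
    using cs assms(4) by (simp add: field_simps)
  also have "\<dots> \<le> c + s * (q - 1/2)"
    using q cs by (simp add: mult_left_mono)
  finally show ?thesis
    by (simp add: m)
qed

section \<open>Sums of independent centred variables\<close>

lemma abs_le_sq_div_add:
  fixes y s :: real
  assumes "0 < s"
  shows "\<bar>y\<bar> \<le> y\<^sup>2 / (2 * s) + s / 2"
proof -
  have "0 \<le> (\<bar>y\<bar> - s)\<^sup>2"
    by simp
  then have "2 * s * \<bar>y\<bar> \<le> y\<^sup>2 + s\<^sup>2"
    by (simp add: power2_eq_square algebra_simps)
  then show ?thesis
    using assms by (simp add: field_simps power2_eq_square)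
qed

lemma integral_PiM_mult_distinct_components:
  fixes f g :: "'a \<Rightarrow> real"
  assumes M: "prob_space M" and I: "finite I" "j \<in> I" "k \<in> I" "j \<noteq> k"
    and fg: "integrable M f" "integrable M g"
  shows "(\<integral>zs. f (zs j) * g (zs k) \<partial>PiM I (\<lambda>_. M)) = (\<integral>z. f z \<partial>M) * (\<integral>z. g z \<partial>M)"
proof -
  interpret P: product_prob_space "\<lambda>_. M" I
    using M by (rule product_prob_spaceI)
  define F where "F i = (if i = j then f else if i = k then g else (\<lambda>_. 1))" for i
  have "(\<Prod>i\<in>I. F i (zs i)) = f (zs j) * g (zs k)" for zs
  proof -
    have "(\<Prod>i\<in>I. F i (zs i)) = (\<Prod>i\<in>{j, k}. F i (zs i))"
      using I by (intro prod.mono_neutral_right) (auto simp: F_def)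
    then show ?thesis
      using I(4) by (simp add: F_def)
  qed
  then have "(\<integral>zs. f (zs j) * g (zs k) \<partial>PiM I (\<lambda>_. M)) = (\<integral>zs. (\<Prod>i\<in>I. F i (zs i)) \<partial>PiM I (\<lambda>_. M))"
    by simp
  also have "\<dots> = (\<Prod>i\<in>I. integral\<^sup>L M (F i))"
    using I(1) fg by (intro P.product_integral_prod) (auto simp: F_def)
  also have "\<dots> = (\<Prod>i\<in>{j, k}. integral\<^sup>L M (F i))"
    using I P.M.prob_space by (intro prod.mono_neutral_right) (auto simp: F_def)
  finally show ?thesis
    using I(4) by (simp add: F_def)
qed

lemma (in prob_space) integral_indicator_sub_prob:
  assumes "A \<in> events"
  shows "(\<integral>z. indicator A z - prob A \<partial>M) = 0"
  using assms prob_space by (subst Bochner_Integration.integral_diff) (auto simp: less_top[symmetric])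

lemma second_moment_sum_iid_le:
  assumes M: "prob_space M" and w: "w \<in> borel_measurable M" "\<And>z. \<bar>w z\<bar> \<le> 1"
    and centered: "(\<integral>z. w z \<partial>M) = 0"
  shows "(\<integral>zs. (\<Sum>k<N. w (zs k))\<^sup>2 \<partial>PiM {..<N} (\<lambda>_. M)) \<le> real N"
proof -
  interpret M: prob_space M
    by (rule M)
  interpret PiM: prob_space "PiM {..<N} (\<lambda>_. M)"
    using M by (intro prob_space_PiM)
  have w_integrable: "integrable M w"
    using w by (intro M.integrable_const_bound[where B=1]) auto
  have w_prod_le: "\<bar>w a * w b\<bar> \<le> 1" for a b
    using mult_le_one[OF w(2) abs_ge_zero w(2)] by (simp add: abs_mult)
  have integrable: "integrable (PiM {..<N} (\<lambda>_. M)) (\<lambda>zs. w (zs j) * w (zs k))"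
    if "j < N" "k < N" for j k
    using that w(1) w_prod_le by (intro PiM.integrable_const_bound[where B=1]) auto
  have cross: "(\<integral>zs. w (zs j) * w (zs k) \<partial>PiM {..<N} (\<lambda>_. M)) = 0"
    if "j < N" "k < N" "j \<noteq> k" for j k
    using integral_PiM_mult_distinct_components[OF M _ _ _ that(3) w_integrable w_integrable] that centered
    by simp
  have diagonal: "(\<integral>zs. w (zs j) * w (zs j) \<partial>PiM {..<N} (\<lambda>_. M)) \<le> 1" if "j < N" for j
    using w_prod_le by (intro PiM.integral_le_const integrable[OF that that] AE_I2) (simp add: abs_le_iff)
  have "(\<integral>zs. (\<Sum>k<N. w (zs k))\<^sup>2 \<partial>PiM {..<N} (\<lambda>_. M)) =
      (\<integral>zs. (\<Sum>j<N. \<Sum>k<N. w (zs j) * w (zs k)) \<partial>PiM {..<N} (\<lambda>_. M))"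
    by (simp add: power2_eq_square sum_product)
  also have "\<dots> = (\<Sum>j<N. \<Sum>k<N. \<integral>zs. w (zs j) * w (zs k) \<partial>PiM {..<N} (\<lambda>_. M))"
    using integrable
    by (subst Bochner_Integration.integral_sum, fastforce intro: integrable_sum)
      (intro sum.cong refl Bochner_Integration.integral_sum, auto)
  also have "\<dots> = (\<Sum>j<N. \<integral>zs. w (zs j) * w (zs j) \<partial>PiM {..<N} (\<lambda>_. M))"
    using cross by (intro sum.cong refl) (simp add: sum.remove[of "{..<N}"])
  also have "\<dots> \<le> (\<Sum>j<N. 1)"
    using diagonal by (intro sum_mono) auto
  finally show ?thesis
    by simp
qed

text \<open>Via the second moment and AM-GM with weight sqrt N, avoiding Jensen's inequality.\<close>
lemma expectation_abs_sum_iid_le_sqrt: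
  assumes M: "prob_space M" and w: "w \<in> borel_measurable M" "\<And>z. \<bar>w z\<bar> \<le> 1"
    and centered: "(\<integral>z. w z \<partial>M) = 0"
  shows "(\<integral>zs. \<bar>\<Sum>k<N. w (zs k)\<bar> \<partial>PiM {..<N} (\<lambda>_. M)) \<le> sqrt (real N)"
proof (cases "N = 0")
  case False
  interpret PiM: prob_space "PiM {..<N} (\<lambda>_. M)"
    using M by (intro prob_space_PiM)
  define s where "s = sqrt (real N)"
  have s: "0 < s" "s\<^sup>2 = real N"
    using False by (auto simp: s_def)
  define Y where "Y zs = (\<Sum>k<N. w (zs k))" for zs :: "nat \<Rightarrow> 'a"
  have Y_measurable: "Y \<in> borel_measurable (PiM {..<N} (\<lambda>_. M))"
    unfolding Y_def using w(1) by measurable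
  have Y_bound: "\<bar>Y zs\<bar> \<le> real N" for zs
  proof -
    have "\<bar>Y zs\<bar> \<le> (\<Sum>k<N. \<bar>w (zs k)\<bar>)"
      unfolding Y_def by (rule sum_abs)
    also have "\<dots> \<le> (\<Sum>k<N. 1)"
      using w(2) by (intro sum_mono)
    finally show ?thesis
      by simp
  qed
  have "(Y zs)\<^sup>2 \<le> (real N)\<^sup>2" for zs
    using Y_bound[of zs] by (metis abs_ge_zero power2_abs power_mono)
  then have Y2_integrable: "integrable (PiM {..<N} (\<lambda>_. M)) (\<lambda>zs. (Y zs)\<^sup>2)"
    using Y_measurable by (intro PiM.integrable_const_bound[where B="(real N)\<^sup>2"]) auto
  have "integrable (PiM {..<N} (\<lambda>_. M)) (\<lambda>zs. \<bar>Y zs\<bar>)"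
    using Y_measurable Y_bound by (intro PiM.integrable_const_bound[where B="real N"]) auto
  then have "(\<integral>zs. \<bar>Y zs\<bar> \<partial>PiM {..<N} (\<lambda>_. M)) \<le>
      (\<integral>zs. (Y zs)\<^sup>2 / (2 * s) + s / 2 \<partial>PiM {..<N} (\<lambda>_. M))"
    using Y2_integrable abs_le_sq_div_add[OF s(1)] by (intro integral_mono) auto
  also have "\<dots> = (\<integral>zs. (Y zs)\<^sup>2 \<partial>PiM {..<N} (\<lambda>_. M)) / (2 * s) + s / 2"
    using Y2_integrable PiM.prob_space by simp
  also have "\<dots> \<le> real N / (2 * s) + s / 2"
    using second_moment_sum_iid_le[OF assms] s(1) by (simp add: Y_def divide_right_mono)
  also have "\<dots> = s"
    using s by (simp add: field_simps power2_eq_square)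
  finally show ?thesis
    by (simp add: Y_def s_def)
qed simp

section \<open>The selection probability of minimal random coding\<close>

lemma prob_space_candidates: "prob_space (candidates N :: (nat \<Rightarrow> 'a::euclidean_space) measure)"
  unfolding candidates_def by (intro prob_space_PiM prob_space_unif_sphere)

lemma AE_candidates_norm:
  "AE zs in (candidates N :: (nat \<Rightarrow> 'a::euclidean_space) measure). \<forall>k\<in>{..<N}. norm (zs k) = 1"
  unfolding candidates_def
  by (intro eventually_ball_finite ballI AE_PiM_component prob_space_unif_sphere AE_unif_sphere_norm)
    auto

lemma pu_density_borel [measurable]: "pu_density \<gamma> p0 x \<in> borel_measurable borel"
  unfolding pu_density_def by measurable

lemma pu_density_nonneg:
  assumes "norm x = 1" "0 \<le> \<gamma>" "\<gamma> < 1" "0 \<le> p0" "p0 \<le> 1"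
  shows "0 \<le> pu_density \<gamma> p0 x z"
  using cap_measure_pos[of x \<gamma>] cap_measure_less_1[of x \<gamma>] assms by (simp add: pu_density_def)

lemma mrc_pi_nonneg:
  assumes "\<And>z. 0 \<le> pu_density \<gamma> p0 x z"
  shows "0 \<le> mrc_pi \<gamma> p0 N x zs k"
  using assms by (simp add: mrc_pi_def sum_nonneg)

lemma sum_mrc_pi_le_1: "(\<Sum>k<N. mrc_pi \<gamma> p0 N x zs k) \<le> 1"
  by (simp add: mrc_pi_def sum_divide_distrib[symmetric] divide_le_eq_1)

lemma selection_prob_cap_eq:
  fixes x :: "'a::euclidean_space" and zs :: "nat \<Rightarrow> 'a" and N :: nat and \<gamma> p0 :: real
  defines "C \<equiv> (\<Sum>k<N. indicator (cap \<gamma> x) (zs k)) :: real"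
  shows "(\<Sum>k<N. mrc_pi \<gamma> p0 N x zs k * indicator (cap \<gamma> x) (zs k)) =
    p0 / cap_measure \<gamma> x * C /
      (p0 / cap_measure \<gamma> x * C + (1 - p0) / (1 - cap_measure \<gamma> x) * (real N - C))"
proof -
  define a where "a = p0 / cap_measure \<gamma> x"
  define b where "b = (1 - p0) / (1 - cap_measure \<gamma> x)"
  have density: "pu_density \<gamma> p0 x z = a * indicator (cap \<gamma> x) z + b * (1 - indicator (cap \<gamma> x) z)"
    for z
    by (simp add: pu_density_def a_def b_def split: split_indicator)
  have "(\<Sum>k<N. pu_density \<gamma> p0 x (zs k) * indicator (cap \<gamma> x) (zs k)) = a * C"
    by (simp add: C_def sum_distrib_left density split: split_indicator)
  moreover have "(\<Sum>k<N. pu_density \<gamma> p0 x (zs k)) = a * C + b * (real N - C)"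
    by (simp add: C_def density sum.distrib sum_distrib_left[symmetric] sum_subtractf)
  ultimately show ?thesis
    by (simp add: mrc_pi_def sum_divide_distrib[symmetric] a_def b_def)
qed

lemma weighted_fraction_deficit_le:
  fixes a b \<theta> C N M :: real
  assumes ab: "0 < a" "0 < b" "a \<le> M" "b \<le> M" and \<theta>: "a * \<theta> + b * (1 - \<theta>) = 1"
    and C: "0 \<le> C" "C \<le> N" and N: "0 < N"
  shows "a * \<theta> - a * C / (a * C + b * (N - C)) \<le> M * \<bar>C - N * \<theta>\<bar> / N"
proof -
  define S where "S = a * C + b * (N - C)"
  have "min a b * C \<le> a * C" "min a b * (N - C) \<le> b * (N - C)"
    using C by (auto intro: mult_right_mono)
  then have "min a b * N \<le> S"
    by (simp add: S_def algebra_simps)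
  moreover have "0 < min a b * N"
    using ab N by simp
  ultimately have S: "0 < S" "min a b * N \<le> S"
    by auto
  have a\<theta>: "a * \<theta> - 1 = - b * (1 - \<theta>)"
    using \<theta> by linarith
  have "a * \<theta> * S - a * C = a * (C * (a * \<theta> - 1) + \<theta> * b * (N - C))"
    by (simp add: S_def algebra_simps)
  also have "\<dots> = a * b * (N * \<theta> - C)"
    unfolding a\<theta> by (simp add: algebra_simps)
  finally have "a * \<theta> - a * C / S = a * b * (N * \<theta> - C) / S"
    using S by (simp add: field_simps)
  also have "\<dots> \<le> a * b * \<bar>C - N * \<theta>\<bar> / S"
    using S ab by (intro divide_right_mono mult_left_mono) auto
  also have "\<dots> \<le> a * b * \<bar>C - N * \<theta>\<bar> / (min a b * N)"
    using S ab \<open>0 < min a b * N\<close> by (intro divide_left_mono) auto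
  also have "\<dots> = max a b * \<bar>C - N * \<theta>\<bar> / N"
    using ab N by (cases "a \<le> b") (simp_all add: min_def max_def field_simps)
  also have "\<dots> \<le> M * \<bar>C - N * \<theta>\<bar> / N"
    using ab N by (intro divide_right_mono mult_right_mono) auto
  finally show ?thesis
    by (simp add: S_def)
qed

lemma selection_prob_cap_ge:
  fixes x :: "'a::euclidean_space" and zs :: "nat \<Rightarrow> 'a"
  assumes x: "norm x = 1" and \<gamma>: "0 \<le> \<gamma>" "\<gamma> < 1" and p0: "0 < p0" "p0 < 1"
    and B: "\<And>z. pu_density \<gamma> p0 x z \<le> B" and N: "0 < N"
  shows "p0 - B * \<bar>\<Sum>k<N. indicator (cap \<gamma> x) (zs k) - cap_measure \<gamma> x\<bar> / real N \<le>
    (\<Sum>k<N. mrc_pi \<gamma> p0 N x zs k * indicator (cap \<gamma> x) (zs k))"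
proof -
  define \<theta> where "\<theta> = cap_measure \<gamma> x"
  define a where "a = p0 / \<theta>"
  define b where "b = (1 - p0) / (1 - \<theta>)"
  define C :: real where "C = (\<Sum>k<N. indicator (cap \<gamma> x) (zs k))"
  have \<theta>: "0 < \<theta>" "\<theta> < 1"
    using cap_measure_pos[OF x \<gamma>(2)] cap_measure_less_1[OF x \<gamma>(1)] by (auto simp: \<theta>_def)
  have "x \<in> cap \<gamma> x" "-x \<notin> cap \<gamma> x"
    using x \<gamma> by (auto simp: cap_def dot_square_norm)
  then have ab: "0 < a" "0 < b" "a \<le> B" "b \<le> B"
    using \<theta> p0 B[of x] B[of "-x"] by (auto simp: a_def b_def \<theta>_def pu_density_def)
  have a\<theta>: "a * \<theta> = p0" "a * \<theta> + b * (1 - \<theta>) = 1"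
    using \<theta> by (auto simp: a_def b_def)
  have "0 \<le> C" "C \<le> real N"
    using sum_mono[of "{..<N}" "\<lambda>k. indicator (cap \<gamma> x) (zs k)" "\<lambda>_. 1::real"]
    by (auto simp: C_def sum_nonneg split: split_indicator)
  moreover have "C - real N * \<theta> = (\<Sum>k<N. indicator (cap \<gamma> x) (zs k) - \<theta>)"
    by (simp add: C_def sum_subtractf)
  ultimately show ?thesis
    using weighted_fraction_deficit_le[OF ab a\<theta>(2), of C "real N"] N
    by (simp add: selection_prob_cap_eq a\<theta>(1) flip: a_def b_def \<theta>_def C_def)
qed

lemma selection_prob_cap_bounds:
  assumes "\<And>z. 0 \<le> pu_density \<gamma> p0 x z"
  shows "0 \<le> (\<Sum>k<N. mrc_pi \<gamma> p0 N x zs k * indicator (cap \<gamma> x) (zs k))"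
    "(\<Sum>k<N. mrc_pi \<gamma> p0 N x zs k * indicator (cap \<gamma> x) (zs k)) \<le> 1"
proof -
  have \<pi>: "0 \<le> mrc_pi \<gamma> p0 N x zs k" for k
    using assms by (rule mrc_pi_nonneg)
  show "0 \<le> (\<Sum>k<N. mrc_pi \<gamma> p0 N x zs k * indicator (cap \<gamma> x) (zs k))"
    by (rule sum_nonneg) (simp add: \<pi>)
  have "(\<Sum>k<N. mrc_pi \<gamma> p0 N x zs k * indicator (cap \<gamma> x) (zs k)) \<le> (\<Sum>k<N. mrc_pi \<gamma> p0 N x zs k)"
    by (rule sum_mono) (simp add: \<pi> split: split_indicator)
  also note sum_mrc_pi_le_1
  finally show "(\<Sum>k<N. mrc_pi \<gamma> p0 N x zs k * indicator (cap \<gamma> x) (zs k)) \<le> 1" .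
qed

lemma p_mrc_ge:
  fixes x :: "'a::euclidean_space"
  assumes x: "norm x = 1" and \<gamma>: "0 \<le> \<gamma>" "\<gamma> < 1" and p0: "0 < p0" "p0 < 1"
    and B: "\<And>z. pu_density \<gamma> p0 x z \<le> B" and N: "0 < N"
  shows "p0 - B / sqrt (real N) \<le> p_mrc \<gamma> p0 N x"
proof -
  interpret P: prob_space "candidates N :: (nat \<Rightarrow> 'a) measure"
    by (rule prob_space_candidates)
  define w where "w z = indicator (cap \<gamma> x) z - cap_measure \<gamma> x" for z :: 'a
  define sel where "sel zs = (\<Sum>k<N. mrc_pi \<gamma> p0 N x zs k * indicator (cap \<gamma> x) (zs k))"
    for zs :: "nat \<Rightarrow> 'a"
  have w_measurable: "w \<in> borel_measurable unif_sphere"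
    unfolding w_def by measurable
  have w_bound: "\<bar>w z\<bar> \<le> 1" for z
    using cap_measure_pos[OF x \<gamma>(2)] cap_measure_less_1[OF x \<gamma>(1)]
    by (simp add: w_def split: split_indicator)
  have w_centered: "(\<integral>z. w z \<partial>unif_sphere) = 0"
    unfolding w_def cap_measure_def
    by (rule prob_space.integral_indicator_sub_prob[OF prob_space_unif_sphere]) simp
  have "sel \<in> borel_measurable (candidates N)"
    unfolding sel_def mrc_pi_def candidates_def by measurable
  then have sel_integrable: "integrable (candidates N) sel"
    using selection_prob_cap_bounds[OF pu_density_nonneg[OF x \<gamma>]] p0
    by (intro P.integrable_const_bound[where B=1]) (auto simp: sel_def)
  have abs_sum_integrable: "integrable (candidates N) (\<lambda>zs. \<bar>\<Sum>k<N. w (zs k)\<bar>)"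
  proof (rule P.integrable_const_bound[where B="real N"])
    show "AE zs in candidates N. norm \<bar>\<Sum>k<N. w (zs k)\<bar> \<le> real N"
      using w_bound sum_mono[of "{..<N}" "\<lambda>k. \<bar>w (_ k)\<bar>" "\<lambda>_. 1"]
      by (auto intro!: AE_I2 order_trans[OF sum_abs])
    show "(\<lambda>zs. \<bar>\<Sum>k<N. w (zs k)\<bar>) \<in> borel_measurable (candidates N)"
      unfolding w_def candidates_def by measurable
  qed
  have "(\<integral>zs. \<bar>\<Sum>k<N. w (zs k)\<bar> \<partial>candidates N) \<le> sqrt (real N)"
    unfolding candidates_def
    by (rule expectation_abs_sum_iid_le_sqrt[OF prob_space_unif_sphere w_measurable w_bound w_centered])
  then have "B / real N * (\<integral>zs. \<bar>\<Sum>k<N. w (zs k)\<bar> \<partial>candidates N) \<le> B / real N * sqrt (real N)"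
    using order_trans[OF pu_density_nonneg B] x \<gamma> p0 by (intro mult_left_mono) auto
  also have "\<dots> = B / sqrt (real N)"
    using N real_sqrt_mult_self[of "real N"] by (simp add: field_simps)
  finally have "p0 - B / sqrt (real N) \<le> p0 - B / real N * (\<integral>zs. \<bar>\<Sum>k<N. w (zs k)\<bar> \<partial>candidates N)"
    by simp
  also have "\<dots> = (\<integral>zs. p0 - B * \<bar>\<Sum>k<N. w (zs k)\<bar> / real N \<partial>candidates N)"
    using abs_sum_integrable by (simp add: P.prob_space)
  also have "\<dots> \<le> (\<integral>zs. sel zs \<partial>candidates N)"
    using abs_sum_integrable sel_integrable selection_prob_cap_ge[OF assms, folded w_def sel_def]
    by (intro integral_mono) auto
  finally show ?thesis
    by (simp add: p_mrc_def sel_def)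
qed

section \<open>Mean squared errors\<close>

lemma norm_scaleR_sub_unit_bounds:
  fixes z x :: "'a::real_normed_vector"
  assumes "norm z = 1" "norm x = 1"
  shows "(\<bar>c\<bar> - 1)\<^sup>2 \<le> (norm (c *\<^sub>R z - x))\<^sup>2" "(norm (c *\<^sub>R z - x))\<^sup>2 \<le> (\<bar>c\<bar> + 1)\<^sup>2"
proof -
  have "\<bar>\<bar>c\<bar> - 1\<bar> \<le> norm (c *\<^sub>R z - x)"
    using norm_triangle_ineq3[of "c *\<^sub>R z" x] assms by simp
  then show "(\<bar>c\<bar> - 1)\<^sup>2 \<le> (norm (c *\<^sub>R z - x))\<^sup>2"
    by (metis abs_ge_zero power2_abs power_mono)
  have "norm (c *\<^sub>R z - x) \<le> \<bar>c\<bar> + 1"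
    using norm_triangle_ineq4[of "c *\<^sub>R z" x] assms by simp
  then show "(norm (c *\<^sub>R z - x))\<^sup>2 \<le> (\<bar>c\<bar> + 1)\<^sup>2"
    by (simp add: power_mono)
qed

lemma pu_density_integrable:
  fixes x :: "'a::euclidean_space"
  assumes "norm x = 1" "0 \<le> \<gamma>" "\<gamma> < 1"
  shows "integrable unif_sphere (pu_density \<gamma> p0 x)"
proof -
  interpret prob_space "unif_sphere :: 'a measure"
    by (rule prob_space_unif_sphere)
  show ?thesis
    by (rule integrable_const_bound[where B="\<bar>p0 / cap_measure \<gamma> x\<bar> + \<bar>(1 - p0) / (1 - cap_measure \<gamma> x)\<bar>"])
      (auto simp: pu_density_def)
qed

lemma integral_pu_density:
  fixes x :: "'a::euclidean_space"
  assumes x: "norm x = 1" and \<gamma>: "0 \<le> \<gamma>" "\<gamma> < 1"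
  shows "(\<integral>z. pu_density \<gamma> p0 x z \<partial>unif_sphere) = 1"
proof -
  interpret prob_space "unif_sphere :: 'a measure"
    by (rule prob_space_unif_sphere)
  define \<theta> where "\<theta> = cap_measure \<gamma> x"
  have \<theta>: "0 < \<theta>" "\<theta> < 1"
    using cap_measure_pos[OF x \<gamma>(2)] cap_measure_less_1[OF x \<gamma>(1)] by (auto simp: \<theta>_def)
  have density: "pu_density \<gamma> p0 x =
      (\<lambda>z. p0 / \<theta> * indicator (cap \<gamma> x) z + (1 - p0) / (1 - \<theta>) * indicator (UNIV - cap \<gamma> x) z)"
    by (auto simp: fun_eq_iff pu_density_def \<theta>_def split: split_indicator)
  have "integrable unif_sphere (indicator A :: 'a \<Rightarrow> real)" if "A \<in> sets borel" for A
    using that by (intro integrable_indicator_iff[THEN iffD2]) (auto simp: less_top[symmetric])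
  moreover have "measure unif_sphere (UNIV - cap \<gamma> x) = 1 - \<theta>"
    using prob_compl[of "cap \<gamma> x"] by (simp add: \<theta>_def cap_measure_def)
  ultimately have "(\<integral>z. pu_density \<gamma> p0 x z \<partial>unif_sphere) = p0 / \<theta> * \<theta> + (1 - p0) / (1 - \<theta>) * (1 - \<theta>)"
    unfolding density by (simp add: \<theta>_def cap_measure_def)
  also have "\<dots> = 1"
    using \<theta> by simp
  finally show ?thesis .
qed

lemma pu_mse_ge:
  fixes x :: "'a::euclidean_space"
  assumes x: "norm x = 1" and \<gamma>: "0 \<le> \<gamma>" "\<gamma> < 1" and p0: "0 \<le> p0" "p0 \<le> 1"
  shows "(\<bar>1 / m_pu TYPE('a) \<gamma> p0\<bar> - 1)\<^sup>2 \<le> pu_mse \<gamma> p0 x"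
proof -
  interpret prob_space "unif_sphere :: 'a measure"
    by (rule prob_space_unif_sphere)
  define c where "c = 1 / m_pu TYPE('a) \<gamma> p0"
  define F where "F z = (norm (c *\<^sub>R z - x))\<^sup>2 * pu_density \<gamma> p0 x z" for z
  have density_nonneg: "0 \<le> pu_density \<gamma> p0 x z" for z
    using pu_density_nonneg[OF x \<gamma> p0] .
  have "integrable unif_sphere F"
  proof (rule integrable_const_bound[where B="(\<bar>c\<bar> + 1)\<^sup>2 * (p0 / cap_measure \<gamma> x + (1 - p0) / (1 - cap_measure \<gamma> x))"])
    show "AE z in unif_sphere. norm (F z) \<le>
        (\<bar>c\<bar> + 1)\<^sup>2 * (p0 / cap_measure \<gamma> x + (1 - p0) / (1 - cap_measure \<gamma> x))"
      using AE_unif_sphere_norm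
    proof eventually_elim
      fix z :: 'a assume "norm z = 1"
      then have "(norm (c *\<^sub>R z - x))\<^sup>2 \<le> (\<bar>c\<bar> + 1)\<^sup>2"
        using norm_scaleR_sub_unit_bounds(2) x by blast
      moreover have "pu_density \<gamma> p0 x z \<le> p0 / cap_measure \<gamma> x + (1 - p0) / (1 - cap_measure \<gamma> x)"
        using cap_measure_pos[OF x \<gamma>(2)] cap_measure_less_1[OF x \<gamma>(1)] p0
        by (simp add: pu_density_def)
      ultimately show "norm (F z) \<le> (\<bar>c\<bar> + 1)\<^sup>2 * (p0 / cap_measure \<gamma> x + (1 - p0) / (1 - cap_measure \<gamma> x))"
        using density_nonneg[of z] by (simp add: F_def mult_mono)
    qed
    show "F \<in> borel_measurable unif_sphere"
      unfolding F_def by measurable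
  qed
  moreover have "AE z in unif_sphere. (\<bar>c\<bar> - 1)\<^sup>2 * pu_density \<gamma> p0 x z \<le> F z"
    using AE_unif_sphere_norm
  proof eventually_elim
    fix z :: 'a assume "norm z = 1"
    then show "(\<bar>c\<bar> - 1)\<^sup>2 * pu_density \<gamma> p0 x z \<le> F z"
      using norm_scaleR_sub_unit_bounds(1) x density_nonneg[of z]
      unfolding F_def by (intro mult_right_mono) auto
  qed
  ultimately have "(\<integral>z. (\<bar>c\<bar> - 1)\<^sup>2 * pu_density \<gamma> p0 x z \<partial>unif_sphere) \<le> (\<integral>z. F z \<partial>unif_sphere)"
    using pu_density_integrable[OF x \<gamma>] by (intro integral_mono_AE) auto
  then show ?thesis
    using integral_pu_density[OF x \<gamma>] by (simp add: pu_mse_def F_def c_def)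
qed

lemma mrc_mse_le:
  fixes x :: "'a::euclidean_space"
  assumes x: "norm x = 1" and \<gamma>: "0 \<le> \<gamma>" "\<gamma> < 1" and p0: "0 \<le> p0" "p0 \<le> 1"
  shows "mrc_mse \<gamma> p0 N x \<le> (\<bar>1 / m_mrc \<gamma> p0 N x\<bar> + 1)\<^sup>2"
proof -
  interpret P: prob_space "candidates N :: (nat \<Rightarrow> 'a) measure"
    by (rule prob_space_candidates)
  define c where "c = 1 / m_mrc \<gamma> p0 N x"
  have \<pi>: "0 \<le> mrc_pi \<gamma> p0 N x zs k" for zs k
    using pu_density_nonneg[OF x \<gamma> p0] by (rule mrc_pi_nonneg)
  have bound: "AE zs in candidates N.
      (\<Sum>k<N. mrc_pi \<gamma> p0 N x zs k * (norm (c *\<^sub>R zs k - x))\<^sup>2) \<le> (\<bar>c\<bar> + 1)\<^sup>2"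
    using AE_candidates_norm
  proof eventually_elim
    fix zs :: "nat \<Rightarrow> 'a" assume zs: "\<forall>k\<in>{..<N}. norm (zs k) = 1"
    have "(\<Sum>k<N. mrc_pi \<gamma> p0 N x zs k * (norm (c *\<^sub>R zs k - x))\<^sup>2) \<le>
        (\<Sum>k<N. mrc_pi \<gamma> p0 N x zs k * (\<bar>c\<bar> + 1)\<^sup>2)"
      using zs norm_scaleR_sub_unit_bounds(2)[OF _ x] \<pi> by (intro sum_mono mult_left_mono) auto
    also have "\<dots> \<le> (\<bar>c\<bar> + 1)\<^sup>2"
      using sum_mrc_pi_le_1[of \<gamma> p0 N x zs] sum_nonneg[of "{..<N}" "mrc_pi \<gamma> p0 N x zs"] \<pi>
      by (simp add: sum_distrib_right[symmetric] mult_left_le_one_le)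
    finally show "(\<Sum>k<N. mrc_pi \<gamma> p0 N x zs k * (norm (c *\<^sub>R zs k - x))\<^sup>2) \<le> (\<bar>c\<bar> + 1)\<^sup>2" .
  qed
  have "mrc_mse \<gamma> p0 N x \<le> (\<integral>zs. (\<bar>c\<bar> + 1)\<^sup>2 \<partial>(candidates N :: (nat \<Rightarrow> 'a) measure))"
    unfolding mrc_mse_def c_def by (intro integral_mono_AE'[OF _ bound[unfolded c_def]]) auto
  then show ?thesis
    using P.prob_space by (simp add: c_def)
qed

lemma candidates_bound_imp:
  fixes lam p0 \<epsilon> :: real and N :: nat
  assumes lam: "0 < lam" and p0: "1/2 < p0" "p0 \<le> 1"
    and N: "real N \<ge> 2 * exp (2 * \<epsilon>) * (2 * (1 + lam) / (lam * (p0 - 1/2)))\<^sup>2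
                     * ln (4 * (1 + lam) / (lam * (p0 - 1/2)))"
  shows "0 < N" "exp \<epsilon> / sqrt (real N) \<le> lam * (p0 - 1/2) / (1 + lam)"
proof -
  define \<delta> where "\<delta> = lam * (p0 - 1/2) / (1 + lam)"
  have "lam / (1 + lam) * (p0 - 1/2) \<le> 1 * (1/2)"
    using lam p0 by (intro mult_mono) auto
  then have \<delta>: "0 < \<delta>" "\<delta> \<le> 1/2"
    using lam p0 by (auto simp: \<delta>_def)
  have "\<delta> * exp 1 \<le> 1/2 * 3"
    using \<delta> exp_le by (intro mult_mono) auto
  then have "exp 1 \<le> 4 / \<delta>"
    using \<delta> by (simp add: field_simps)
  then have "1 \<le> ln (4 / \<delta>)"
    using \<delta> by (simp add: ln_ge_iff)
  then have "2 * exp (2 * \<epsilon>) * (2 / \<delta>)\<^sup>2 * 1 \<le> 2 * exp (2 * \<epsilon>) * (2 / \<delta>)\<^sup>2 * ln (4 / \<delta>)"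
    by (intro mult_left_mono) auto
  moreover have "2 * (1 + lam) / (lam * (p0 - 1/2)) = 2 / \<delta>" "4 * (1 + lam) / (lam * (p0 - 1/2)) = 4 / \<delta>"
    using lam p0 by (simp_all add: \<delta>_def)
  then have "2 * exp (2 * \<epsilon>) * (2 / \<delta>)\<^sup>2 * ln (4 / \<delta>) \<le> real N"
    using N by (simp only:)
  ultimately have "2 * exp (2 * \<epsilon>) * (2 / \<delta>)\<^sup>2 \<le> real N"
    by linarith
  moreover have "exp (2 * \<epsilon>) / \<delta>\<^sup>2 \<le> 2 * exp (2 * \<epsilon>) * (2 / \<delta>)\<^sup>2"
    using \<delta> by (simp add: field_simps)
  moreover have "(exp \<epsilon> / \<delta>)\<^sup>2 = exp (2 * \<epsilon>) / \<delta>\<^sup>2"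
    by (simp add: power_divide exp_double)
  ultimately have N': "(exp \<epsilon> / \<delta>)\<^sup>2 \<le> real N"
    by linarith
  then show "0 < N"
    using \<delta> by (metis exp_gt_zero divide_pos_pos zero_less_power of_nat_0_less_iff order_less_le_trans)
  have "exp \<epsilon> / \<delta> \<le> sqrt (real N)"
    using real_sqrt_le_mono[OF N'] \<delta> by simp
  then show "exp \<epsilon> / sqrt (real N) \<le> lam * (p0 - 1/2) / (1 + lam)"
    using \<delta> \<open>0 < N\<close> unfolding \<delta>_def[symmetric] by (simp add: field_simps)
qed

lemma mse_bound_of_scale_bounds:
  fixes m m' lam E :: real
  assumes m: "0 < m" "m / (1 + lam) \<le> m'" and lam: "0 \<le> lam" and E: "(\<bar>1 / m\<bar> - 1)\<^sup>2 \<le> E"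
  shows "(\<bar>1 / m'\<bar> + 1)\<^sup>2 \<le> (1 + lam)\<^sup>2 * E + 2 * (1 + lam) * (2 + lam) * sqrt E + (2 + lam)\<^sup>2"
proof -
  have "0 < m / (1 + lam)"
    using m lam by simp
  moreover have "0 < m'"
    using \<open>0 < m / (1 + lam)\<close> m(2) by linarith
  ultimately have "\<bar>1 / m'\<bar> \<le> 1 / (m / (1 + lam))"
    using divide_left_mono[OF m(2), of 1] mult_pos_pos[of m' "m / (1 + lam)"] by simp
  then have "\<bar>1 / m'\<bar> + 1 \<le> (1 + lam) * (1 / m) + 1"
    by simp
  also have "\<dots> \<le> (1 + lam) * (1 + sqrt E) + 1"
    using real_sqrt_le_mono[OF E] m lam by (intro add_right_mono mult_left_mono) auto
  also have "\<dots> = (1 + lam) * sqrt E + (2 + lam)"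
    by (simp add: algebra_simps)
  finally have "\<bar>1 / m'\<bar> + 1 \<le> (1 + lam) * sqrt E + (2 + lam)" .
  then have "(\<bar>1 / m'\<bar> + 1)\<^sup>2 \<le> ((1 + lam) * sqrt E + (2 + lam))\<^sup>2"
    by (simp add: power_mono)
  also have "\<dots> = (1 + lam)\<^sup>2 * E + 2 * (1 + lam) * (2 + lam) * sqrt E + (2 + lam)\<^sup>2"
    using order_trans[OF zero_le_power2 E] by (simp add: power2_eq_square algebra_simps)
  finally show ?thesis .
qed

theorem theorem10:
  fixes x :: "'a::euclidean_space" and \<gamma> p0 \<epsilon> lam :: real and N :: nat
  assumes d2: "DIM('a) \<ge> 2"
    and gam: "0 \<le> \<gamma>" "\<gamma> < 1"
    and p0: "1/2 < p0" "p0 \<le> 1"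
    and ldp: "pu_ldp TYPE('a) \<epsilon> \<gamma> p0"
    and lam: "lam > 0"
    and N: "real N \<ge> 2 * exp (2 * \<epsilon>) * (2 * (1 + lam) / (lam * (p0 - 1/2)))\<^sup>2
                     * ln (4 * (1 + lam) / (lam * (p0 - 1/2)))"
    and x: "x \<in> sphere 0 1"
  shows "mrc_mse \<gamma> p0 N x \<le>
           (1 + lam)\<^sup>2 * pu_mse \<gamma> p0 x
           + 2 * (1 + lam) * (2 + lam) * sqrt (pu_mse \<gamma> p0 x) + (2 + lam)\<^sup>2"
proof -
  have x: "norm x = 1"
    using x by simp
  have p0': "1/2 \<le> p0" "0 \<le> p0"
    using p0 by simp_all
  note ldp_bounds = pu_ldp_bounds[OF x d2 gam p0'(1) p0(2) ldp]
  note N_bounds = candidates_bound_imp[OF lam p0 N]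
  have "p0 - lam * (p0 - 1/2) / (1 + lam) \<le> p_mrc \<gamma> p0 N x"
    using p_mrc_ge[OF x gam _ ldp_bounds N_bounds(1)] N_bounds(2) p0 by simp
  then have scale: "m_pu TYPE('a) \<gamma> p0 / (1 + lam) \<le> m_mrc \<gamma> p0 N x"
    unfolding m_pu_def m_mrc_def using d2 gam lam by (intro m_fun_ge_div) auto
  have m_pu_pos: "0 < m_pu TYPE('a) \<gamma> p0"
    unfolding m_pu_def using d2 gam p0 by (intro m_fun_pos) auto
  have "mrc_mse \<gamma> p0 N x \<le> (\<bar>1 / m_mrc \<gamma> p0 N x\<bar> + 1)\<^sup>2"
    using mrc_mse_le[OF x gam p0'(2) p0(2)] .
  also have "\<dots> \<le> (1 + lam)\<^sup>2 * pu_mse \<gamma> p0 x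
           + 2 * (1 + lam) * (2 + lam) * sqrt (pu_mse \<gamma> p0 x) + (2 + lam)\<^sup>2"
    using lam by (intro mse_bound_of_scale_bounds[OF m_pu_pos scale] pu_mse_ge[OF x gam p0'(2) p0(2)]) simp
  finally show ?thesis .
qed

end
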